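(* Let $h_1\in L^1(p)$ and $h_2\in L^2(p)$ be weakly differentiable functions on $]a,b[$ such that $h_1'<0$ and $h_2'<0$ almost everywhere. Then $$\operatorname*{ess\,inf}_{]a,b[}\left(-\frac{\widetilde{\mathcal{T}} h_2}{h_2'\,w}\right)\leq C(p,w)\leq \operatorname*{ess\,sup}_{]a,b[}\left(-\frac{\widetilde{\mathcal{T}} h_1}{h_1'\,w}\right).$$ Furthermore, if $-\widetilde{\mathcal{T}} h_2/(h_2'w)$ is (a.e.) constant on $]a,b[$, then $h_2$ saturates the weighted Poincaré inequality $\mathrm{PI}(p,w)$, i.e. $\mathrm{Var}_p[h_2]=C(p,w)\,\mathbb{E}_p[|h_2'|^2w]$.
   Context: Let $-\infty\le a<b\le\infty$ and let $p\in L^1(]a,b[)$ with $p>0$ a.e. and $\int_a^b p=1$ (a probability density on $]a,b[$). A weight is a function $w\in L^1_{\mathrm{loc}}(]a,b[)$ with $w>0$ a.e. and $pw\in L^1_{\mathrm{loc}}(]a,b[)$; fix such a weight $w$. Write $\mathbb{E}_p[f]=\int_a^b fp$ and $\mathrm{Var}_p$ for the corresponding variance. A function is weakly differentiable if it is locally absolutely continuous on $]a,b[$ (derivative $h'\in L^1_{\mathrm{loc}}$). Let $H^1(p,w)=\{h\in L^2(p): h \text{ weakly differentiable}, h'\in L^2(pw)\}$. The weighted Poincaré constant $C(p,w)\in[0,\infty]$ is the smallest constant $C$ such that $\mathrm{Var}_p[h]\le C\,\mathbb{E}_p[|h'|^2w]$ for all $h\in H^1(p,w)$. For $h\in L^1(p)$,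 define $\widetilde{\mathcal{T}} h(x)=\frac{1}{p(x)}\int_a^x (h-\mathbb{E}_p[h])\,p$. *)

theory Defs
  imports "HOL-Analysis.Analysis"
begin

definition oiv :: "ereal \<Rightarrow> ereal \<Rightarrow> real set" where
  "oiv a b = {x. a < ereal x \<and> ereal x < b}"

definition loc_integrable :: "real set \<Rightarrow> (real \<Rightarrow> real) \<Rightarrow> bool" where
  "loc_integrable I f \<longleftrightarrow> (\<forall>c d. {c..d} \<subseteq> I \<longrightarrow> set_integrable lborel {c..d} f)"

definition is_density :: "ereal \<Rightarrow> ereal \<Rightarrow> (real \<Rightarrow> real) \<Rightarrow> bool" where
  "is_density a b p \<longleftrightarrow> set_integrable lborel (oiv a b) p
     \<and> (AE x in lborel. x \<in> oiv a b \<longrightarrow> p x > 0)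
     \<and> (LINT x:oiv a b|lborel. p x) = 1"

definition is_weight :: "ereal \<Rightarrow> ereal \<Rightarrow> (real \<Rightarrow> real) \<Rightarrow> (real \<Rightarrow> real) \<Rightarrow> bool" where
  "is_weight a b p w \<longleftrightarrow> loc_integrable (oiv a b) w
     \<and> (AE x in lborel. x \<in> oiv a b \<longrightarrow> w x > 0)
     \<and> loc_integrable (oiv a b) (\<lambda>x. p x * w x)"

text \<open>h is weakly differentiable on I with weak derivative h': h is locally absolutely
  continuous, i.e. the indefinite integral of the locally integrable function h'.\<close>
definition weak_deriv :: "real set \<Rightarrow> (real \<Rightarrow> real) \<Rightarrow> (real \<Rightarrow> real) \<Rightarrow> bool" where
  "weak_deriv I h h' \<longleftrightarrow> loc_integrable I h'
     \<and> (\<forall>x\<in>I. \<forall>y\<in>I. x \<le> y \<longrightarrow> h y - h x = (LINT t:{x..y}|lborel. h' t))"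

definition in_L1 :: "ereal \<Rightarrow> ereal \<Rightarrow> (real \<Rightarrow> real) \<Rightarrow> (real \<Rightarrow> real) \<Rightarrow> bool" where
  "in_L1 a b p h \<longleftrightarrow> set_integrable lborel (oiv a b) (\<lambda>x. h x * p x)"

definition in_L2 :: "ereal \<Rightarrow> ereal \<Rightarrow> (real \<Rightarrow> real) \<Rightarrow> (real \<Rightarrow> real) \<Rightarrow> bool" where
  "in_L2 a b p h \<longleftrightarrow> h \<in> borel_measurable (restrict_space lborel (oiv a b))
     \<and> set_integrable lborel (oiv a b) (\<lambda>x. (h x)\<^sup>2 * p x)"

definition Ep :: "ereal \<Rightarrow> ereal \<Rightarrow> (real \<Rightarrow> real) \<Rightarrow> (real \<Rightarrow> real) \<Rightarrow> real" where
  "Ep a b p h = (LINT x:oiv a b|lborel. h x * p x)"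

definition Varp :: "ereal \<Rightarrow> ereal \<Rightarrow> (real \<Rightarrow> real) \<Rightarrow> (real \<Rightarrow> real) \<Rightarrow> real" where
  "Varp a b p h = (LINT x:oiv a b|lborel. (h x - Ep a b p h)\<^sup>2 * p x)"

definition energy :: "ereal \<Rightarrow> ereal \<Rightarrow> (real \<Rightarrow> real) \<Rightarrow> (real \<Rightarrow> real) \<Rightarrow> (real \<Rightarrow> real) \<Rightarrow> ereal" where
  "energy a b p w h' = enn2ereal (\<integral>\<^sup>+ x\<in>oiv a b. ennreal ((h' x)\<^sup>2 * w x * p x) \<partial>lborel)"

definition in_H1 :: "ereal \<Rightarrow> ereal \<Rightarrow> (real \<Rightarrow> real) \<Rightarrow> (real \<Rightarrow> real) \<Rightarrow> (real \<Rightarrow> real) \<Rightarrow> (real \<Rightarrow> real) \<Rightarrow> bool" where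
  "in_H1 a b p w h h' \<longleftrightarrow> in_L2 a b p h \<and> weak_deriv (oiv a b) h h'
     \<and> set_integrable lborel (oiv a b) (\<lambda>x. (h' x)\<^sup>2 * (p x * w x))"

definition poincare_const :: "ereal \<Rightarrow> ereal \<Rightarrow> (real \<Rightarrow> real) \<Rightarrow> (real \<Rightarrow> real) \<Rightarrow> ereal" where
  "poincare_const a b p w = Inf {C. C \<ge> 0 \<and> (\<forall>h h'. in_H1 a b p w h h' \<longrightarrow>
       ereal (Varp a b p h) \<le> C * energy a b p w h')}"

definition Tt :: "ereal \<Rightarrow> ereal \<Rightarrow> (real \<Rightarrow> real) \<Rightarrow> (real \<Rightarrow> real) \<Rightarrow> real \<Rightarrow> real" where
  "Tt a b p h x = (1 / p x) *
     (LINT t:{t. a < ereal t \<and> t \<le> x}|lborel. (h t - Ep a b p h) * p t)"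

definition ess_sup_on :: "real set \<Rightarrow> (real \<Rightarrow> real) \<Rightarrow> ereal" where
  "ess_sup_on I f = Inf {z. AE x in lborel. x \<in> I \<longrightarrow> ereal (f x) \<le> z}"

definition ess_inf_on :: "real set \<Rightarrow> (real \<Rightarrow> real) \<Rightarrow> ereal" where
  "ess_inf_on I f = Sup {z. AE x in lborel. x \<in> I \<longrightarrow> z \<le> ereal (f x)}"

end

theory Submission
  imports Defs
begin

text \<open>
  For a decreasing h with h' = -k, put F(t) = p(t) T-tilde h(t), the integral of
  (h - E h) p over ]a,t]. Expanding the mean shows
  F(t) = double integral over y <= t < x of (h y - h x) p(x) p(y), so F >= 0, and the variance is
  Var g = double integral over y < x of (g y - g x)^2 p(x) p(y).
  Since the integral of k over [y,x] is h y - h x, Fubini gives Var h = integral of k F, while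
  Cauchy-Schwarz, (g y - g x)^2 <= (h y - h x) * (integral over [y,x] of g'^2/k), gives
  Var g <= integral of (g'^2/k) F. With r = - T-tilde h / (h' w) both right-hand sides equal the
  integral of r |u'|^2 w p (u = h, resp. u = g). Bounding r above by its essential supremum bounds
  C(p,w) from above; bounding it below by its essential infimum shows that the Rayleigh quotient
  of h, and hence C(p,w), is at least that infimum. If r is constant the two bounds coincide and
  h attains equality.
\<close>

lemma oiv_eq_einterval: "oiv a b = einterval a b"
  by (simp add: oiv_def einterval_def)

lemma oiv_measurable [measurable]: "oiv a b \<in> sets borel"
  by (simp add: oiv_eq_einterval)

lemma atLeastAtMost_subset_oiv:
  assumes "x \<in> oiv a b" "y \<in> oiv a b"
  shows "{x..y} \<subseteq> oiv a b"
proof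
  fix t assume "t \<in> {x..y}"
  then have "ereal x \<le> ereal t" "ereal t \<le> ereal y" by auto
  with assms show "t \<in> oiv a b"
    unfolding oiv_def using le_less_trans less_le_trans by blast
qed

lemma loc_integrable_oiv_measurable:
  assumes "a < b" "loc_integrable (oiv a b) f"
  shows "(\<lambda>x. indicator (oiv a b) x * f x) \<in> borel_measurable borel"
proof -
  obtain u l :: "nat \<Rightarrow> real" where oiv: "oiv a b = (\<Union>i. {l i..u i})"
    and "incseq u" "decseq l"
    using einterval_Icc_approximation[OF assms(1)] unfolding oiv_eq_einterval by metis
  then have mono: "{l i..u i} \<subseteq> {l j..u j}" if "i \<le> j" for i j
    using that by (auto simp: incseq_def decseq_def intro: order_trans)
  show ?thesis
  proof (rule borel_measurable_LIMSEQ_real)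
    show "(\<lambda>i. indicator {l i..u i} x * f x) \<longlonglongrightarrow> indicator (oiv a b) x * f x" for x
    proof (cases "x \<in> oiv a b")
      case True
      then obtain i where "x \<in> {l i..u i}" using oiv by auto
      then have "x \<in> {l j..u j}" if "i \<le> j" for j using mono[OF that] by blast
      then have "\<forall>\<^sub>F j in sequentially. indicator {l j..u j} x * f x = indicator (oiv a b) x * f x"
        unfolding eventually_sequentially using True by (intro exI[of _ i]) auto
      then show ?thesis by (rule tendsto_eventually)
    next
      case False
      then have "x \<notin> {l i..u i}" for i using oiv by blast
      with False show ?thesis by simp
    qed
    show "(\<lambda>x. indicator {l i..u i} x * f x) \<in> borel_measurable borel" for i
    proof -
      have "set_integrable lborel {l i..u i} f"
        using assms(2) oiv unfolding loc_integrable_def by blast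
      then show ?thesis
        unfolding set_integrable_def by (auto dest: borel_measurable_integrable)
    qed
  qed
qed

lemma not_AE_notin_oiv:
  assumes "a < b"
  shows "\<not> (AE x in lborel. x \<notin> oiv a b)"
proof
  assume "AE x in lborel. x \<notin> oiv a b"
  then have null: "emeasure lborel (oiv a b) = 0"
    by (subst (asm) AE_iff_measurable[OF _ refl]) auto
  obtain u l :: "nat \<Rightarrow> real" where "oiv a b = (\<Union>i. {l i..u i})" "l 0 < u 0"
    using einterval_Icc_approximation[OF assms] unfolding oiv_eq_einterval by metis
  then have "emeasure lborel {l 0..u 0} \<le> emeasure lborel (oiv a b)"
    by (intro emeasure_mono) auto
  with null \<open>l 0 < u 0\<close> show False by simp
qed

lemma set_integral_cong_AE_on:
  fixes f g :: "real \<Rightarrow> real"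
  assumes [measurable]: "I \<in> sets borel" "S \<in> sets borel" and "S \<subseteq> I"
    and [measurable]: "(\<lambda>x. indicator I x * f x) \<in> borel_measurable borel"
      "(\<lambda>x. indicator I x * g x) \<in> borel_measurable borel"
    and "AE x in lborel. x \<in> I \<longrightarrow> f x = g x"
  shows "(LINT x:S|lborel. f x) = (LINT x:S|lborel. g x)"
    and "set_integrable lborel S f \<longleftrightarrow> set_integrable lborel S g"
proof -
  have restrict: "(\<lambda>x. indicator S x *\<^sub>R u x) = (\<lambda>x. indicator S x * (indicator I x * u x))"
    for u :: "real \<Rightarrow> real"
    using \<open>S \<subseteq> I\<close> by (intro ext) (auto simp: indicator_def)
  have [measurable]: "(\<lambda>x. indicator S x *\<^sub>R f x) \<in> borel_measurable lborel"
    "(\<lambda>x. indicator S x *\<^sub>R g x) \<in> borel_measurable lborel"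
    unfolding restrict by measurable
  have ae: "AE x in lborel. indicator S x *\<^sub>R f x = indicator S x *\<^sub>R g x"
    using assms(6) by eventually_elim (use \<open>S \<subseteq> I\<close> in \<open>auto simp: indicator_def\<close>)
  show "(LINT x:S|lborel. f x) = (LINT x:S|lborel. g x)"
    unfolding set_lebesgue_integral_def by (rule integral_cong_AE[OF _ _ ae]) measurable
  show "set_integrable lborel S f \<longleftrightarrow> set_integrable lborel S g"
    unfolding set_integrable_def by (rule integrable_cong_AE[OF _ _ ae]) measurable
qed

lemma integrable_indicator_mult:
  fixes f :: "_ \<Rightarrow> real"
  assumes "A \<in> sets M" "integrable M f"
  shows "integrable M (\<lambda>x. indicator A x * f x)"
  using integrable_mult_indicator[OF assms] by simp

section \<open>Weak derivatives\<close>

lemma weak_deriv_oiv_cong_AE: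
  assumes "weak_deriv (oiv a b) h h'"
    and [measurable]: "(\<lambda>x. indicator (oiv a b) x * h' x) \<in> borel_measurable borel"
      "(\<lambda>x. indicator (oiv a b) x * g' x) \<in> borel_measurable borel"
    and "AE x in lborel. x \<in> oiv a b \<longrightarrow> h' x = g' x"
    and "\<And>x. x \<in> oiv a b \<Longrightarrow> g x = h x"
  shows "weak_deriv (oiv a b) g g'"
  unfolding weak_deriv_def
proof (intro conjI ballI impI)
  note cong = set_integral_cong_AE_on[OF oiv_measurable _ _ assms(2-4)]
  show "loc_integrable (oiv a b) g'"
    unfolding loc_integrable_def
  proof (intro allI impI)
    fix c d assume cd: "{c..d} \<subseteq> oiv a b"
    with assms(1) have "set_integrable lborel {c..d} h'"
      unfolding weak_deriv_def loc_integrable_def by blast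
    with cong(2)[OF _ cd] show "set_integrable lborel {c..d} g'" by simp
  qed
  fix x y assume xy: "x \<in> oiv a b" "y \<in> oiv a b" "x \<le> y"
  have "g y - g x = h y - h x" using assms(5) xy by simp
  also have "\<dots> = (LINT t:{x..y}|lborel. h' t)"
    using assms(1) xy unfolding weak_deriv_def by blast
  also have "\<dots> = (LINT t:{x..y}|lborel. g' t)"
    by (rule cong(1)[OF _ atLeastAtMost_subset_oiv[OF xy(1,2)]]) simp
  finally show "g y - g x = (LINT t:{x..y}|lborel. g' t)" .
qed

lemma weak_deriv_Icc:
  assumes "weak_deriv I g g'" "{y..x} \<subseteq> I" "y \<le> x"
  shows "g x - g y = (\<integral>t. indicator {y..x} t * g' t \<partial>lborel)"
    and "integrable lborel (\<lambda>t. indicator {y..x} t * g' t)"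
proof -
  have "x \<in> I" "y \<in> I" using assms(2,3) by auto
  with assms show "g x - g y = (\<integral>t. indicator {y..x} t * g' t \<partial>lborel)"
    unfolding weak_deriv_def set_lebesgue_integral_def by simp
  show "integrable lborel (\<lambda>t. indicator {y..x} t * g' t)"
    using assms unfolding weak_deriv_def loc_integrable_def set_integrable_def by simp
qed

lemma weak_deriv_nonpos_antimono_on:
  assumes "weak_deriv (oiv a b) h h'" "AE t in lborel. t \<in> oiv a b \<longrightarrow> h' t \<le> 0"
  shows "antimono_on (oiv a b) h"
proof (rule monotone_onI)
  fix x y assume xy: "x \<in> oiv a b" "y \<in> oiv a b" "x \<le> y"
  have "AE t in lborel. 0 \<le> indicator {x..y} t * - h' t"
    using assms(2) by eventually_elim (use atLeastAtMost_subset_oiv[OF xy(1,2)] in \<open>auto simp: indicator_def\<close>)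
  from integral_nonneg_AE[OF this] weak_deriv_Icc(1)[OF assms(1) atLeastAtMost_subset_oiv[OF xy(1,2)] xy(3)]
  show "h y \<le> h x" by simp
qed

lemma AE_of_bool_Ico_eq_indicator:
  fixes x y :: real
  shows "AE t in lborel. (of_bool (y \<le> t \<and> t < x) :: 'a :: zero_neq_one) = indicator {y..x} t"
  using AE_lborel_singleton[of x] by eventually_elim (auto simp: indicator_def)

lemma weak_deriv_nn_integral_neg:
  fixes k :: "real \<Rightarrow> real"
  assumes "weak_deriv I h (\<lambda>t. - k t)" "{y..x} \<subseteq> I" "y \<le> x"
    and [measurable]: "k \<in> borel_measurable borel" and "\<And>t. 0 \<le> k t"
  shows "(\<integral>\<^sup>+t. of_bool (y \<le> t \<and> t < x) * ennreal (k t) \<partial>lborel) = ennreal (h y - h x)"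
proof -
  have "(\<integral>\<^sup>+t. of_bool (y \<le> t \<and> t < x) * ennreal (k t) \<partial>lborel)
      = (\<integral>\<^sup>+t. ennreal (indicator {y..x} t * k t) \<partial>lborel)"
    using AE_of_bool_Ico_eq_indicator[of y x] by (intro nn_integral_cong_AE) (auto simp: indicator_def)
  also have "\<dots> = ennreal (\<integral>t. indicator {y..x} t * k t \<partial>lborel)"
    using weak_deriv_Icc(2)[OF assms(1-3)] assms(5)
    by (intro nn_integral_eq_integral) auto
  also have "(\<integral>t. indicator {y..x} t * k t \<partial>lborel) = h y - h x"
    using weak_deriv_Icc(1)[OF assms(1-3)] by simp
  finally show ?thesis .
qed

lemma weak_deriv_abs_diff_le:
  assumes "weak_deriv I g g'" "{y..x} \<subseteq> I" "y \<le> x"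
  shows "ennreal \<bar>g x - g y\<bar> \<le> (\<integral>\<^sup>+t. of_bool (y \<le> t \<and> t < x) * ennreal \<bar>g' t\<bar> \<partial>lborel)"
proof -
  note int = weak_deriv_Icc(2)[OF assms]
  have "\<bar>g x - g y\<bar> = \<bar>\<integral>t. indicator {y..x} t * g' t \<partial>lborel\<bar>"
    using weak_deriv_Icc(1)[OF assms] by simp
  also have "\<dots> \<le> (\<integral>t. \<bar>indicator {y..x} t * g' t\<bar> \<partial>lborel)"
    using integral_norm_bound[of lborel "\<lambda>t. indicator {y..x} t * g' t"] by simp
  finally have "ennreal \<bar>g x - g y\<bar> \<le> (\<integral>\<^sup>+t. ennreal \<bar>indicator {y..x} t * g' t\<bar> \<partial>lborel)"
    using int by (simp add: nn_integral_eq_integral ennreal_leI)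
  also have "\<dots> = (\<integral>\<^sup>+t. of_bool (y \<le> t \<and> t < x) * ennreal \<bar>g' t\<bar> \<partial>lborel)"
    using AE_of_bool_Ico_eq_indicator[of y x]
    by (intro nn_integral_cong_AE) (auto simp: indicator_def abs_mult)
  finally show ?thesis .
qed

text \<open>Cauchy-Schwarz for |g'| = (|g'| / sqrt k) * sqrt k on [y, x], where the integral of k is h y - h x.\<close>

lemma weak_deriv_sq_diff_le:
  fixes k g' :: "real \<Rightarrow> real"
  assumes "weak_deriv I g g'" "weak_deriv I h (\<lambda>t. - k t)" "{y..x} \<subseteq> I" "y \<le> x"
    and [measurable]: "k \<in> borel_measurable borel" "g' \<in> borel_measurable borel"
    and knn: "\<And>t. 0 \<le> k t" and kpos: "AE t in lborel. y \<le> t \<and> t \<le> x \<longrightarrow> 0 < k t"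
  shows "ennreal ((g y - g x)\<^sup>2)
    \<le> ennreal (h y - h x) * (\<integral>\<^sup>+t. of_bool (y \<le> t \<and> t < x) * ennreal ((g' t)\<^sup>2 / k t) \<partial>lborel)"
proof -
  define F where "F t = of_bool (y \<le> t \<and> t < x) * ennreal (\<bar>g' t\<bar> / sqrt (k t))" for t
  define H where "H t = of_bool (y \<le> t \<and> t < x) * ennreal (sqrt (k t))" for t
  have [measurable]: "F \<in> borel_measurable lborel" "H \<in> borel_measurable lborel"
    unfolding F_def H_def by measurable
  have "(\<integral>\<^sup>+t. of_bool (y \<le> t \<and> t < x) * ennreal \<bar>g' t\<bar> \<partial>lborel) = (\<integral>\<^sup>+t. F t * H t \<partial>lborel)"
    using kpos
  proof (intro nn_integral_cong_AE, eventually_elim)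
    case (elim t)
    show ?case
    proof (cases "y \<le> t \<and> t < x")
      case True
      with elim have "0 < k t" by simp
      then show ?thesis
        using True by (simp add: F_def H_def ennreal_mult[symmetric])
    qed (auto simp: F_def H_def)
  qed
  with weak_deriv_abs_diff_le[OF assms(1,3,4)]
  have "(ennreal \<bar>g y - g x\<bar>)\<^sup>2 \<le> (\<integral>\<^sup>+t. F t * H t \<partial>lborel)\<^sup>2"
    by (simp add: abs_minus_commute power_mono)
  also have "\<dots> \<le> (\<integral>\<^sup>+t. F t ^ 2 \<partial>lborel) * (\<integral>\<^sup>+t. H t ^ 2 \<partial>lborel)"
    by (rule Cauchy_Schwarz_nn_integral) measurable
  also have "(\<integral>\<^sup>+t. F t ^ 2 \<partial>lborel) = (\<integral>\<^sup>+t. of_bool (y \<le> t \<and> t < x) * ennreal ((g' t)\<^sup>2 / k t) \<partial>lborel)"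
    using knn by (intro nn_integral_cong) (simp add: F_def power_mult_distrib ennreal_power power_divide)
  also have "(\<integral>\<^sup>+t. H t ^ 2 \<partial>lborel) = (\<integral>\<^sup>+t. of_bool (y \<le> t \<and> t < x) * ennreal (k t) \<partial>lborel)"
    using knn by (intro nn_integral_cong) (simp add: H_def power_mult_distrib ennreal_power)
  also have "(\<integral>\<^sup>+t. of_bool (y \<le> t \<and> t < x) * ennreal (k t) \<partial>lborel) = ennreal (h y - h x)"
    by (rule weak_deriv_nn_integral_neg[OF assms(2-5) knn])
  finally show ?thesis by (simp add: ennreal_power mult.commute)
qed

lemma nn_integral_Fubini_between:
  fixes \<phi> :: "real \<Rightarrow> ennreal" and G :: "real \<Rightarrow> real \<Rightarrow> ennreal"
  assumes [measurable]: "\<phi> \<in> borel_measurable borel"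
    "(\<lambda>(x, y). G x y) \<in> borel_measurable (lborel \<Otimes>\<^sub>M lborel)"
  shows "(\<integral>\<^sup>+t. \<phi> t * (\<integral>\<^sup>+x. \<integral>\<^sup>+y. of_bool (y \<le> t \<and> t < x) * G x y \<partial>lborel \<partial>lborel) \<partial>lborel)
    = (\<integral>\<^sup>+x. \<integral>\<^sup>+y. G x y * (\<integral>\<^sup>+t. of_bool (y \<le> t \<and> t < x) * \<phi> t \<partial>lborel) \<partial>lborel \<partial>lborel)"
proof -
  have "(\<integral>\<^sup>+t. \<phi> t * (\<integral>\<^sup>+x. \<integral>\<^sup>+y. of_bool (y \<le> t \<and> t < x) * G x y \<partial>lborel \<partial>lborel) \<partial>lborel)
     = (\<integral>\<^sup>+t. \<integral>\<^sup>+x. \<integral>\<^sup>+y. \<phi> t * (of_bool (y \<le> t \<and> t < x) * G x y) \<partial>lborel \<partial>lborel \<partial>lborel)"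
    by (simp add: nn_integral_cmult)
  also have "\<dots> = (\<integral>\<^sup>+x. \<integral>\<^sup>+t. \<integral>\<^sup>+y. \<phi> t * (of_bool (y \<le> t \<and> t < x) * G x y) \<partial>lborel \<partial>lborel \<partial>lborel)"
    by (rule lborel_pair.Fubini') measurable
  also have "\<dots> = (\<integral>\<^sup>+x. \<integral>\<^sup>+y. \<integral>\<^sup>+t. \<phi> t * (of_bool (y \<le> t \<and> t < x) * G x y) \<partial>lborel \<partial>lborel \<partial>lborel)"
    by (rule nn_integral_cong, rule lborel_pair.Fubini') measurable
  also have "\<dots> = (\<integral>\<^sup>+x. \<integral>\<^sup>+y. G x y * (\<integral>\<^sup>+t. of_bool (y \<le> t \<and> t < x) * \<phi> t \<partial>lborel) \<partial>lborel \<partial>lborel)"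
    by (simp add: nn_integral_cmult[symmetric] mult_ac)
  finally show ?thesis .
qed

lemma nn_integral_symmetric_eq_twice_lower:
  fixes f :: "real \<Rightarrow> real \<Rightarrow> real"
  assumes [measurable]: "(\<lambda>(x, y). f x y) \<in> borel_measurable (lborel \<Otimes>\<^sub>M lborel)"
    and nonneg: "\<And>x y. 0 \<le> f x y" and sym: "\<And>x y. f x y = f y x" and diag: "\<And>x. f x x = 0"
  shows "(\<integral>\<^sup>+x. \<integral>\<^sup>+y. ennreal (f x y) \<partial>lborel \<partial>lborel)
    = 2 * (\<integral>\<^sup>+x. \<integral>\<^sup>+y. ennreal (of_bool (y < x) * f x y) \<partial>lborel \<partial>lborel)"
proof -
  have split: "ennreal (f x y) = ennreal (of_bool (y < x) * f x y) + ennreal (of_bool (x < y) * f x y)" for x y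
    using nonneg[of x y] diag[of x] by (cases x y rule: linorder_cases) auto
  have upper: "(\<integral>\<^sup>+x. \<integral>\<^sup>+y. ennreal (of_bool (x < y) * f x y) \<partial>lborel \<partial>lborel)
      = (\<integral>\<^sup>+x. \<integral>\<^sup>+y. ennreal (of_bool (y < x) * f x y) \<partial>lborel \<partial>lborel)"
    by (subst lborel_pair.Fubini') (simp_all add: sym)
  have "(\<integral>\<^sup>+x. \<integral>\<^sup>+y. ennreal (f x y) \<partial>lborel \<partial>lborel)
      = (\<integral>\<^sup>+x. (\<integral>\<^sup>+y. ennreal (of_bool (y < x) * f x y) \<partial>lborel)
           + (\<integral>\<^sup>+y. ennreal (of_bool (x < y) * f x y) \<partial>lborel) \<partial>lborel)"
    unfolding split by (intro nn_integral_cong nn_integral_add) auto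
  also have "\<dots> = (\<integral>\<^sup>+x. \<integral>\<^sup>+y. ennreal (of_bool (y < x) * f x y) \<partial>lborel \<partial>lborel)
      + (\<integral>\<^sup>+x. \<integral>\<^sup>+y. ennreal (of_bool (x < y) * f x y) \<partial>lborel \<partial>lborel)"
    by (rule nn_integral_add) measurable
  finally show ?thesis unfolding upper by (simp add: mult_2)
qed

lemma AE_le_ess_sup_on: "AE x in lborel. x \<in> I \<longrightarrow> ereal (f x) \<le> ess_sup_on I f"
proof (cases "{z. AE x in lborel. x \<in> I \<longrightarrow> ereal (f x) \<le> z} = {}")
  case False
  from Inf_countable_INF[OF False] obtain g :: "nat \<Rightarrow> ereal"
    where g: "range g \<subseteq> {z. AE x in lborel. x \<in> I \<longrightarrow> ereal (f x) \<le> z}"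
      and "Inf {z. AE x in lborel. x \<in> I \<longrightarrow> ereal (f x) \<le> z} = (INF i. g i)"
    by blast
  then have inf: "ess_sup_on I f = (INF i. g i)" by (simp add: ess_sup_on_def)
  have "AE x in lborel. \<forall>i. x \<in> I \<longrightarrow> ereal (f x) \<le> g i"
    using g by (subst AE_all_countable) auto
  then show ?thesis unfolding inf by eventually_elim (auto intro: INF_greatest)
qed (simp add: ess_sup_on_def)

lemma AE_ess_inf_on_le: "AE x in lborel. x \<in> I \<longrightarrow> ess_inf_on I f \<le> ereal (f x)"
proof (cases "{z. AE x in lborel. x \<in> I \<longrightarrow> z \<le> ereal (f x)} = {}")
  case False
  from Sup_countable_SUP[OF False] obtain g :: "nat \<Rightarrow> ereal"
    where g: "range g \<subseteq> {z. AE x in lborel. x \<in> I \<longrightarrow> z \<le> ereal (f x)}"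
      and "Sup {z. AE x in lborel. x \<in> I \<longrightarrow> z \<le> ereal (f x)} = (SUP i. g i)"
    by blast
  then have sup: "ess_inf_on I f = (SUP i. g i)" by (simp add: ess_inf_on_def)
  have "AE x in lborel. \<forall>i. x \<in> I \<longrightarrow> g i \<le> ereal (f x)"
    using g by (subst AE_all_countable) auto
  then show ?thesis unfolding sup by eventually_elim (auto intro: SUP_least)
qed (simp add: ess_inf_on_def)

lemma ess_inf_sup_on_AE_const:
  assumes "AE x in lborel. x \<in> I \<longrightarrow> f x = c"
  shows "ereal c \<le> ess_inf_on I f" and "ess_sup_on I f \<le> ereal c"
  unfolding ess_inf_on_def ess_sup_on_def
  by (auto intro!: Sup_upper Inf_lower eventually_mono[OF assms])

lemma set_nn_integral_le_ess_sup_mult: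
  assumes [measurable]: "(\<lambda>t. f t * indicator I t) \<in> borel_measurable lborel"
  shows "(\<integral>\<^sup>+t\<in>I. ennreal (r t) * f t \<partial>lborel) \<le> e2ennreal (ess_sup_on I r) * (\<integral>\<^sup>+t\<in>I. f t \<partial>lborel)"
proof -
  have "(\<integral>\<^sup>+t\<in>I. ennreal (r t) * f t \<partial>lborel) \<le> (\<integral>\<^sup>+t. e2ennreal (ess_sup_on I r) * (f t * indicator I t) \<partial>lborel)"
    using AE_le_ess_sup_on[of I r]
  proof (intro nn_integral_mono_AE, eventually_elim)
    case (elim t)
    then have "t \<in> I \<Longrightarrow> ennreal (r t) \<le> e2ennreal (ess_sup_on I r)"
      using e2ennreal_mono by fastforce
    then show ?case by (cases "t \<in> I") (auto intro: mult_right_mono)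
  qed
  also have "\<dots> = e2ennreal (ess_sup_on I r) * (\<integral>\<^sup>+t\<in>I. f t \<partial>lborel)"
    by (rule nn_integral_cmult) measurable
  finally show ?thesis .
qed

lemma poincare_const_nonneg: "0 \<le> poincare_const a b p w"
  unfolding poincare_const_def by (rule Inf_greatest) auto

lemma Varp_div_energy_le_poincare_const:
  assumes "in_H1 a b p w h h'" "energy a b p w h' = ereal e" "0 < e"
  shows "ereal (Varp a b p h / e) \<le> poincare_const a b p w"
  unfolding poincare_const_def
proof (rule Inf_greatest, clarify)
  fix C :: ereal
  assume "0 \<le> C" "\<forall>g g'. in_H1 a b p w g g' \<longrightarrow> ereal (Varp a b p g) \<le> C * energy a b p w g'"
  with assms(1) have "ereal (Varp a b p h) \<le> C * ereal e"
    unfolding assms(2)[symmetric] by blast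
  with \<open>0 \<le> C\<close> \<open>0 < e\<close> show "ereal (Varp a b p h / e) \<le> C"
    by (cases C) (auto simp: pos_divide_le_eq)
qed

section \<open>Densities vanishing outside the interval\<close>

locale supported_density =
  fixes a b :: ereal and p :: "real \<Rightarrow> real"
  assumes p_measurable [measurable]: "p \<in> borel_measurable borel"
    and p_nonneg: "\<And>x. 0 \<le> p x"
    and p_outside: "\<And>x. x \<notin> oiv a b \<Longrightarrow> p x = 0"
    and p_integrable: "integrable lborel p"
    and p_integral: "integral\<^sup>L lborel p = 1"
begin

lemma set_integral_oiv_eq_integral:
  "(LINT x:oiv a b|lborel. f x * p x) = (\<integral>x. f x * p x \<partial>lborel)"
  unfolding set_lebesgue_integral_def
  by (rule Bochner_Integration.integral_cong) (auto simp: indicator_def p_outside)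

lemma Ep_eq_integral: "Ep a b p h = (\<integral>x. h x * p x \<partial>lborel)"
  unfolding Ep_def by (rule set_integral_oiv_eq_integral)

lemma Varp_eq_integral: "Varp a b p h = (\<integral>x. (h x - Ep a b p h)\<^sup>2 * p x \<partial>lborel)"
  unfolding Varp_def by (rule set_integral_oiv_eq_integral)

lemma integrable_mult_density_of_sq:
  assumes [measurable]: "h \<in> borel_measurable borel"
    and "integrable lborel (\<lambda>x. (h x)\<^sup>2 * p x)"
  shows "integrable lborel (\<lambda>x. h x * p x)"
proof (rule Bochner_Integration.integrable_bound)
  show "integrable lborel (\<lambda>x. (h x)\<^sup>2 * p x + p x)"
    using assms(2) p_integrable by simp
  have "\<bar>h x\<bar> * p x \<le> ((h x)\<^sup>2 + 1) * p x" for x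
  proof -
    have "0 \<le> (\<bar>h x\<bar> - 1)\<^sup>2" by simp
    then have "\<bar>h x\<bar> \<le> (h x)\<^sup>2 + 1"
      using abs_ge_zero[of "h x"] by (simp add: power2_diff power2_abs)
    then show ?thesis using p_nonneg[of x] by (rule mult_right_mono)
  qed
  then show "AE x in lborel. norm (h x * p x) \<le> norm ((h x)\<^sup>2 * p x + p x)"
    using p_nonneg by (intro AE_I2) (simp add: abs_mult distrib_right)
qed simp

lemma integral_sq_dev_eq:
  assumes [measurable]: "h \<in> borel_measurable borel"
    and hi: "integrable lborel (\<lambda>x. (h x)\<^sup>2 * p x)"
  shows "integrable lborel (\<lambda>y. (h y - c)\<^sup>2 * p y)"
    and "(\<integral>y. (h y - c)\<^sup>2 * p y \<partial>lborel) = (c - Ep a b p h)\<^sup>2 + Varp a b p h"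
proof -
  have hpi: "integrable lborel (\<lambda>x. h x * p x)" by (rule integrable_mult_density_of_sq[OF assms])
  have expand: "(\<lambda>y. (h y - c)\<^sup>2 * p y) = (\<lambda>y. (h y)\<^sup>2 * p y - 2 * c * (h y * p y) + c\<^sup>2 * p y)" for c
    by (auto simp: power2_diff algebra_simps)
  show "integrable lborel (\<lambda>y. (h y - c)\<^sup>2 * p y)"
    unfolding expand using hi hpi p_integrable by simp
  have "(\<integral>y. (h y - c)\<^sup>2 * p y \<partial>lborel) = (\<integral>y. (h y)\<^sup>2 * p y \<partial>lborel) - 2 * c * Ep a b p h + c\<^sup>2" for c
    unfolding expand using hi hpi p_integrable p_integral by (simp add: Ep_eq_integral)
  from this[of c] this[of "Ep a b p h"]
  show "(\<integral>y. (h y - c)\<^sup>2 * p y \<partial>lborel) = (c - Ep a b p h)\<^sup>2 + Varp a b p h"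
    by (simp add: Varp_eq_integral power2_eq_square algebra_simps)
qed

lemma nn_integral_sq_diff_eq_Varp:
  assumes [measurable]: "h \<in> borel_measurable borel"
    and hi: "integrable lborel (\<lambda>x. (h x)\<^sup>2 * p x)"
  shows "(\<integral>\<^sup>+x. \<integral>\<^sup>+y. ennreal ((h y - h x)\<^sup>2 * p x * p y) \<partial>lborel \<partial>lborel) = 2 * ennreal (Varp a b p h)"
proof -
  define E where "E = Ep a b p h"
  define V where "V = Varp a b p h"
  note sq_dev = integral_sq_dev_eq[OF assms, folded E_def V_def]
  have V_nonneg: "0 \<le> V"
    unfolding V_def Varp_eq_integral by (rule integral_nonneg_AE) (simp add: p_nonneg)
  have "(\<integral>\<^sup>+y. ennreal ((h y - h x)\<^sup>2 * p x * p y) \<partial>lborel)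
      = ennreal (p x * (h x - E)\<^sup>2 + V * p x)" for x
  proof -
    have "(\<integral>\<^sup>+y. ennreal ((h y - h x)\<^sup>2 * p x * p y) \<partial>lborel)
        = (\<integral>\<^sup>+y. ennreal (p x * ((h y - h x)\<^sup>2 * p y)) \<partial>lborel)"
      by (simp add: mult_ac)
    also have "\<dots> = ennreal (p x * (\<integral>y. (h y - h x)\<^sup>2 * p y \<partial>lborel))"
      using sq_dev(1)[of "h x"] p_nonneg by (subst nn_integral_eq_integral) auto
    finally show ?thesis
      unfolding sq_dev(2) by (simp add: power2_commute algebra_simps)
  qed
  then have "(\<integral>\<^sup>+x. \<integral>\<^sup>+y. ennreal ((h y - h x)\<^sup>2 * p x * p y) \<partial>lborel \<partial>lborel)
      = (\<integral>\<^sup>+x. ennreal (p x * (h x - E)\<^sup>2 + V * p x) \<partial>lborel)"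
    by simp
  also have "\<dots> = ennreal (V + V)"
  proof -
    have "(\<integral>x. p x * (h x - E)\<^sup>2 + V * p x \<partial>lborel) = V + V"
      using sq_dev[of E] p_integrable p_integral by (simp add: mult.commute)
    with sq_dev(1)[of E] V_nonneg p_integrable p_nonneg show ?thesis
      by (subst nn_integral_eq_integral) (auto simp: mult.commute)
  qed
  also have "\<dots> = 2 * ennreal V"
    using V_nonneg by (simp add: ennreal_mult' flip: mult_2)
  finally show ?thesis unfolding V_def .
qed

lemma Varp_eq_nn_integral_lower:
  assumes [measurable]: "h \<in> borel_measurable borel"
    and "integrable lborel (\<lambda>x. (h x)\<^sup>2 * p x)"
  shows "ennreal (Varp a b p h)
    = (\<integral>\<^sup>+x. \<integral>\<^sup>+y. ennreal (of_bool (y < x) * ((h y - h x)\<^sup>2 * p x * p y)) \<partial>lborel \<partial>lborel)"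
proof -
  have "2 * ennreal (Varp a b p h)
      = 2 * (\<integral>\<^sup>+x. \<integral>\<^sup>+y. ennreal (of_bool (y < x) * ((h y - h x)\<^sup>2 * p x * p y)) \<partial>lborel \<partial>lborel)"
    unfolding nn_integral_sq_diff_eq_Varp[OF assms, symmetric]
    by (rule nn_integral_symmetric_eq_twice_lower) (auto simp: p_nonneg power2_commute)
  then show ?thesis by (simp add: ennreal_mult_cancel_left)
qed

text \<open>This is p(t) times the operator T-tilde applied to h, evaluated at t.\<close>

definition centered_primitive :: "(real \<Rightarrow> real) \<Rightarrow> real \<Rightarrow> real" where
  "centered_primitive h t = (LINT s:{s. a < ereal s \<and> s \<le> t}|lborel. (h s - Ep a b p h) * p s)"

lemma centered_primitive_eq:
  assumes [measurable]: "h \<in> borel_measurable borel" and hpi: "integrable lborel (\<lambda>x. h x * p x)"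
  shows "centered_primitive h t
    = (\<integral>y. indicator {..t} y * (h y * p y) \<partial>lborel) * (\<integral>x. indicator {t<..} x * p x \<partial>lborel)
      - (\<integral>y. indicator {..t} y * p y \<partial>lborel) * (\<integral>x. indicator {t<..} x * (h x * p x) \<partial>lborel)"
proof -
  define A where "A = (\<integral>y. indicator {..t} y * (h y * p y) \<partial>lborel)"
  define B where "B = (\<integral>y. indicator {t<..} y * (h y * p y) \<partial>lborel)"
  define P where "P = (\<integral>y. indicator {..t} y * p y \<partial>lborel)"
  define Q where "Q = (\<integral>y. indicator {t<..} y * p y \<partial>lborel)"
  have split: "indicator {..t} y + indicator {t<..} y = (1::real)" for y
    by (auto simp: indicator_def)
  have E: "Ep a b p h = A + B"
  proof -
    have "Ep a b p h = (\<integral>y. indicator {..t} y * (h y * p y) + indicator {t<..} y * (h y * p y) \<partial>lborel)"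
      unfolding Ep_eq_integral by (simp flip: distrib_right add: split)
    with hpi show ?thesis by (simp add: A_def B_def integrable_indicator_mult)
  qed
  have Q: "Q = 1 - P"
  proof -
    have "1 = (\<integral>y. indicator {..t} y * p y + indicator {t<..} y * p y \<partial>lborel)"
      unfolding p_integral[symmetric] by (simp flip: distrib_right add: split)
    with p_integrable show ?thesis by (simp add: P_def Q_def eq_diff_eq integrable_indicator_mult)
  qed
  have "centered_primitive h t
      = (\<integral>s. indicator {..t} s * (h s * p s) - Ep a b p h * (indicator {..t} s * p s) \<partial>lborel)"
    unfolding centered_primitive_def set_lebesgue_integral_def
    by (rule Bochner_Integration.integral_cong)
      (auto simp: indicator_def oiv_def algebra_simps p_outside)
  also have "\<dots> = A - Ep a b p h * P"
    using hpi p_integrable by (simp add: A_def P_def integrable_indicator_mult)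
  also have "\<dots> = A * Q - P * B"
    unfolding E Q by (simp add: algebra_simps)
  finally show ?thesis by (simp add: A_def B_def P_def Q_def)
qed

lemma centered_primitive_eq_integral:
  assumes [measurable]: "h \<in> borel_measurable borel" and hpi: "integrable lborel (\<lambda>x. h x * p x)"
  shows "integrable lborel
      (\<lambda>x. indicator {t<..} x * p x * (\<integral>y. indicator {..t} y * (p y * (h y - h x)) \<partial>lborel))"
    and "centered_primitive h t
      = (\<integral>x. indicator {t<..} x * p x * (\<integral>y. indicator {..t} y * (p y * (h y - h x)) \<partial>lborel) \<partial>lborel)"
proof -
  define A where "A = (\<integral>y. indicator {..t} y * (h y * p y) \<partial>lborel)"
  define P where "P = (\<integral>y. indicator {..t} y * p y \<partial>lborel)"
  have inner: "(\<integral>y. indicator {..t} y * (p y * (h y - h x)) \<partial>lborel) = A - h x * P" for x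
  proof -
    have "(\<lambda>y. indicator {..t} y * (p y * (h y - h x)))
        = (\<lambda>y. indicator {..t} y * (h y * p y) - h x * (indicator {..t} y * p y))"
      by (auto simp: algebra_simps)
    with hpi p_integrable show ?thesis by (simp add: A_def P_def integrable_indicator_mult)
  qed
  have eq: "(\<lambda>x. indicator {t<..} x * p x * (\<integral>y. indicator {..t} y * (p y * (h y - h x)) \<partial>lborel))
      = (\<lambda>x. A * (indicator {t<..} x * p x) - P * (indicator {t<..} x * (h x * p x)))"
    unfolding inner by (auto simp: algebra_simps)
  show "integrable lborel
      (\<lambda>x. indicator {t<..} x * p x * (\<integral>y. indicator {..t} y * (p y * (h y - h x)) \<partial>lborel))"
    unfolding eq using hpi p_integrable by (simp add: integrable_indicator_mult)
  show "centered_primitive h t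
      = (\<integral>x. indicator {t<..} x * p x * (\<integral>y. indicator {..t} y * (p y * (h y - h x)) \<partial>lborel) \<partial>lborel)"
    unfolding eq centered_primitive_eq[OF assms] using hpi p_integrable
    by (simp add: A_def P_def integrable_indicator_mult)
qed

lemma centered_primitive_double_integral:
  assumes [measurable]: "h \<in> borel_measurable borel" and hpi: "integrable lborel (\<lambda>x. h x * p x)"
    and anti: "antimono_on (oiv a b) h"
  shows "0 \<le> centered_primitive h t"
    and "ennreal (centered_primitive h t) = (\<integral>\<^sup>+x. \<integral>\<^sup>+y.
      of_bool (y \<le> t \<and> t < x) * ennreal ((h y - h x) * p x * p y) \<partial>lborel \<partial>lborel)"
proof -
  define g where "g x y = indicator {t<..} x * p x * (indicator {..t} y * (p y * (h y - h x)))" for x y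
  have g_nonneg: "0 \<le> g x y" for x y
  proof (cases "y \<le> t \<and> t < x \<and> x \<in> oiv a b \<and> y \<in> oiv a b")
    case True
    then have "h x \<le> h y" using monotone_onD[OF anti, of y x] by auto
    then show ?thesis using True p_nonneg[of x] p_nonneg[of y] by (simp add: g_def)
  qed (auto simp: g_def indicator_def p_outside)
  have g_int: "integrable lborel (g x)" for x
  proof -
    have "g x = (\<lambda>y. indicator {t<..} x * p x * (indicator {..t} y * (h y * p y) - h x * (indicator {..t} y * p y)))"
      by (auto simp: g_def algebra_simps)
    with hpi p_integrable show ?thesis by (simp add: integrable_indicator_mult)
  qed
  have K_nonneg: "0 \<le> (\<integral>y. g x y \<partial>lborel)" for x
    by (rule integral_nonneg_AE) (simp add: g_nonneg)
  have K: "integrable lborel (\<lambda>x. \<integral>y. g x y \<partial>lborel)"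
    "centered_primitive h t = (\<integral>x. (\<integral>y. g x y \<partial>lborel) \<partial>lborel)"
    using centered_primitive_eq_integral[OF assms(1,2)] by (simp_all add: g_def)
  show "0 \<le> centered_primitive h t"
    unfolding K(2) by (rule integral_nonneg_AE) (simp add: K_nonneg)
  have "(\<integral>\<^sup>+x. \<integral>\<^sup>+y. of_bool (y \<le> t \<and> t < x) * ennreal ((h y - h x) * p x * p y) \<partial>lborel \<partial>lborel)
      = (\<integral>\<^sup>+x. \<integral>\<^sup>+y. ennreal (g x y) \<partial>lborel \<partial>lborel)"
    by (intro nn_integral_cong) (auto simp: g_def indicator_def mult_ac)
  also have "\<dots> = (\<integral>\<^sup>+x. ennreal (\<integral>y. g x y \<partial>lborel) \<partial>lborel)"
    using g_int g_nonneg by (simp add: nn_integral_eq_integral)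
  also have "\<dots> = ennreal (centered_primitive h t)"
    unfolding K(2) using K(1) K_nonneg by (simp add: nn_integral_eq_integral)
  finally show "ennreal (centered_primitive h t) = (\<integral>\<^sup>+x. \<integral>\<^sup>+y.
      of_bool (y \<le> t \<and> t < x) * ennreal ((h y - h x) * p x * p y) \<partial>lborel \<partial>lborel)" ..
qed

lemma nn_integral_mult_centered_primitive:
  assumes [measurable]: "h \<in> borel_measurable borel" "\<phi> \<in> borel_measurable borel"
    and "integrable lborel (\<lambda>x. h x * p x)" "antimono_on (oiv a b) h"
  shows "(\<integral>\<^sup>+t. \<phi> t * ennreal (centered_primitive h t) \<partial>lborel)
    = (\<integral>\<^sup>+x. \<integral>\<^sup>+y. ennreal ((h y - h x) * p x * p y)
         * (\<integral>\<^sup>+t. of_bool (y \<le> t \<and> t < x) * \<phi> t \<partial>lborel) \<partial>lborel \<partial>lborel)"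
  unfolding centered_primitive_double_integral(2)[OF assms(1,3,4)]
  by (rule nn_integral_Fubini_between) measurable

lemma off_support_pair_vanishes:
  assumes "\<not> (x \<in> oiv a b \<and> y \<in> oiv a b \<and> y < x)"
  shows "ennreal ((h y - h x) * p x * p y) * (\<integral>\<^sup>+t. of_bool (y \<le> t \<and> t < x) * \<phi> t \<partial>lborel) = 0"
    and "ennreal (of_bool (y < x) * ((g y - g x)\<^sup>2 * p x * p y)) = 0"
proof -
  have "p x * p y = 0 \<or> \<not> y < x"
    using assms p_outside by auto
  moreover have "(\<lambda>t. of_bool (y \<le> t \<and> t < x) * \<phi> t) = (\<lambda>t. 0)" if "\<not> y < x"
    using that by auto
  ultimately show "ennreal ((h y - h x) * p x * p y) * (\<integral>\<^sup>+t. of_bool (y \<le> t \<and> t < x) * \<phi> t \<partial>lborel) = 0"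
    and "ennreal (of_bool (y < x) * ((g y - g x)\<^sup>2 * p x * p y)) = 0"
    by (auto simp: mult.assoc)
qed

lemma Varp_eq_nn_integral_centered_primitive:
  assumes [measurable]: "h \<in> borel_measurable borel" "k \<in> borel_measurable borel"
    and hi: "integrable lborel (\<lambda>x. (h x)\<^sup>2 * p x)" and k_nonneg: "\<And>t. 0 \<le> k t"
    and deriv: "weak_deriv (oiv a b) h (\<lambda>t. - k t)"
  shows "ennreal (Varp a b p h) = (\<integral>\<^sup>+t. ennreal (k t) * ennreal (centered_primitive h t) \<partial>lborel)"
proof -
  have anti: "antimono_on (oiv a b) h"
    using deriv by (rule weak_deriv_nonpos_antimono_on) (simp add: k_nonneg)
  have "(\<integral>\<^sup>+t. ennreal (k t) * ennreal (centered_primitive h t) \<partial>lborel)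
    = (\<integral>\<^sup>+x. \<integral>\<^sup>+y. ennreal ((h y - h x) * p x * p y)
         * (\<integral>\<^sup>+t. of_bool (y \<le> t \<and> t < x) * ennreal (k t) \<partial>lborel) \<partial>lborel \<partial>lborel)"
    using integrable_mult_density_of_sq[OF assms(1) hi] anti by (intro nn_integral_mult_centered_primitive) auto
  also have "\<dots> = (\<integral>\<^sup>+x. \<integral>\<^sup>+y. ennreal (of_bool (y < x) * ((h y - h x)\<^sup>2 * p x * p y)) \<partial>lborel \<partial>lborel)"
  proof (intro nn_integral_cong)
    fix x y
    show "ennreal ((h y - h x) * p x * p y) * (\<integral>\<^sup>+t. of_bool (y \<le> t \<and> t < x) * ennreal (k t) \<partial>lborel)
      = ennreal (of_bool (y < x) * ((h y - h x)\<^sup>2 * p x * p y))"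
    proof (cases "x \<in> oiv a b \<and> y \<in> oiv a b \<and> y < x")
      case True
      then have sub: "{y..x} \<subseteq> oiv a b" by (simp add: atLeastAtMost_subset_oiv)
      have "0 \<le> h y - h x" using True monotone_onD[OF anti, of y x] by simp
      with True weak_deriv_nn_integral_neg[OF deriv sub _ _ k_nonneg] show ?thesis
        by (simp add: ennreal_mult'[symmetric] p_nonneg power2_eq_square mult_ac)
    next
      case False
      show ?thesis using off_support_pair_vanishes[OF False] by simp
    qed
  qed
  also have "\<dots> = ennreal (Varp a b p h)"
    by (rule Varp_eq_nn_integral_lower[OF assms(1) hi, symmetric])
  finally show ?thesis ..
qed

lemma pair_sq_diff_le:
  assumes [measurable]: "k \<in> borel_measurable borel" "g' \<in> borel_measurable borel"
    and k_nonneg: "\<And>t. 0 \<le> k t" and k_pos: "AE t in lborel. t \<in> oiv a b \<longrightarrow> 0 < k t"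
    and deriv: "weak_deriv (oiv a b) h (\<lambda>t. - k t)" and g_deriv: "weak_deriv (oiv a b) g g'"
  shows "ennreal (of_bool (y < x) * ((g y - g x)\<^sup>2 * p x * p y))
    \<le> ennreal ((h y - h x) * p x * p y)
       * (\<integral>\<^sup>+t. of_bool (y \<le> t \<and> t < x) * ennreal ((g' t)\<^sup>2 / k t) \<partial>lborel)"
proof (cases "x \<in> oiv a b \<and> y \<in> oiv a b \<and> y < x")
  case True
  then have sub: "{y..x} \<subseteq> oiv a b" by (simp add: atLeastAtMost_subset_oiv)
  have "AE t in lborel. y \<le> t \<and> t \<le> x \<longrightarrow> 0 < k t"
    using k_pos by eventually_elim (use sub in auto)
  with weak_deriv_sq_diff_le[OF g_deriv deriv sub] True k_nonneg
  have "ennreal ((g y - g x)\<^sup>2) * ennreal (p x * p y)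
      \<le> ennreal (h y - h x) * (\<integral>\<^sup>+t. of_bool (y \<le> t \<and> t < x) * ennreal ((g' t)\<^sup>2 / k t) \<partial>lborel)
         * ennreal (p x * p y)"
    by (intro mult_right_mono) auto
  moreover have "0 \<le> h y - h x"
    using True monotone_onD[OF weak_deriv_nonpos_antimono_on[OF deriv], of y x] k_nonneg by simp
  then have "ennreal ((h y - h x) * p x * p y) = ennreal (h y - h x) * ennreal (p x * p y)"
    by (simp add: ennreal_mult' mult.assoc)
  moreover have "ennreal (of_bool (y < x) * ((g y - g x)\<^sup>2 * p x * p y))
      = ennreal ((g y - g x)\<^sup>2) * ennreal (p x * p y)"
    using True by (simp add: ennreal_mult' mult.assoc)
  ultimately show ?thesis by (simp add: mult_ac)
next
  case False
  show ?thesis using off_support_pair_vanishes[OF False] by simp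
qed

lemma Varp_le_nn_integral_centered_primitive:
  assumes [measurable]: "h \<in> borel_measurable borel" "k \<in> borel_measurable borel"
      "g \<in> borel_measurable borel" "g' \<in> borel_measurable borel"
    and hpi: "integrable lborel (\<lambda>x. h x * p x)" and k_nonneg: "\<And>t. 0 \<le> k t"
    and k_pos: "AE t in lborel. t \<in> oiv a b \<longrightarrow> 0 < k t"
    and deriv: "weak_deriv (oiv a b) h (\<lambda>t. - k t)"
    and gi: "integrable lborel (\<lambda>x. (g x)\<^sup>2 * p x)" and g_deriv: "weak_deriv (oiv a b) g g'"
  shows "ennreal (Varp a b p g) \<le> (\<integral>\<^sup>+t. ennreal ((g' t)\<^sup>2 / k t) * ennreal (centered_primitive h t) \<partial>lborel)"
proof -
  have "ennreal (Varp a b p g)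
      = (\<integral>\<^sup>+x. \<integral>\<^sup>+y. ennreal (of_bool (y < x) * ((g y - g x)\<^sup>2 * p x * p y)) \<partial>lborel \<partial>lborel)"
    by (rule Varp_eq_nn_integral_lower[OF assms(3) gi])
  also have "\<dots> \<le> (\<integral>\<^sup>+x. \<integral>\<^sup>+y. ennreal ((h y - h x) * p x * p y)
         * (\<integral>\<^sup>+t. of_bool (y \<le> t \<and> t < x) * ennreal ((g' t)\<^sup>2 / k t) \<partial>lborel) \<partial>lborel \<partial>lborel)"
    by (intro nn_integral_mono pair_sq_diff_le[OF assms(2,4) k_nonneg k_pos deriv g_deriv])
  also have "\<dots> = (\<integral>\<^sup>+t. ennreal ((g' t)\<^sup>2 / k t) * ennreal (centered_primitive h t) \<partial>lborel)"
    using weak_deriv_nonpos_antimono_on[OF deriv] k_nonneg hpi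
    by (intro nn_integral_mult_centered_primitive[symmetric]) auto
  finally show ?thesis .
qed

end

section \<open>The weighted Poincare ratio\<close>

locale poincare_setting =
  fixes a b :: ereal and p w :: "real \<Rightarrow> real"
  assumes ab: "a < b" and density: "is_density a b p" and weight: "is_weight a b p w"
begin

definition zero_ext :: "(real \<Rightarrow> real) \<Rightarrow> real \<Rightarrow> real" where
  "zero_ext f x = indicator (oiv a b) x * f x"

text \<open>p0 agrees with p almost everywhere on ]a,b[, so it has the same moments, but it is
  globally measurable and nonnegative.\<close>

definition p0 :: "real \<Rightarrow> real" where
  "p0 x = max 0 (zero_ext p x)"

lemma zero_ext_eq [simp]: "x \<in> oiv a b \<Longrightarrow> zero_ext f x = f x"
  and zero_ext_outside [simp]: "x \<notin> oiv a b \<Longrightarrow> zero_ext f x = 0"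
  by (simp_all add: zero_ext_def)

lemma zero_ext_comp: "zero_ext (\<lambda>x. F x (f x)) = (\<lambda>x. indicator (oiv a b) x * F x (zero_ext f x))"
  by (auto simp: zero_ext_def indicator_def)

lemma zero_ext_p_measurable [measurable]: "zero_ext p \<in> borel_measurable borel"
proof -
  have "set_integrable lborel (oiv a b) p" using density unfolding is_density_def by blast
  then show ?thesis
    unfolding set_integrable_def zero_ext_def[abs_def] by (auto dest: borel_measurable_integrable)
qed

lemma zero_ext_w_measurable [measurable]: "zero_ext w \<in> borel_measurable borel"
  using loc_integrable_oiv_measurable[OF ab] weight
  unfolding is_weight_def zero_ext_def[abs_def] by blast

lemma p0_measurable [measurable]: "p0 \<in> borel_measurable borel"
  unfolding p0_def[abs_def] by measurable

lemma AE_p_pos: "AE x in lborel. x \<in> oiv a b \<longrightarrow> 0 < p x"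
  using density unfolding is_density_def by blast

lemma AE_w_pos: "AE x in lborel. x \<in> oiv a b \<longrightarrow> 0 < w x"
  using weight unfolding is_weight_def by blast

lemma AE_p0_eq: "AE x in lborel. x \<in> oiv a b \<longrightarrow> p0 x = p x"
  using AE_p_pos by eventually_elim (auto simp: p0_def)

sublocale p0: supported_density a b p0
proof
  have ae: "AE x in lborel. p0 x = indicator (oiv a b) x *\<^sub>R p x"
    using AE_p_pos by eventually_elim (auto simp: p0_def indicator_def)
  have "set_integrable lborel (oiv a b) p" "(LINT x:oiv a b|lborel. p x) = 1"
    using density unfolding is_density_def by blast+
  then show "integrable lborel p0" "integral\<^sup>L lborel p0 = 1"
    unfolding set_integrable_def set_lebesgue_integral_def
    using integrable_cong_AE[OF _ _ ae] integral_cong_AE[OF _ _ ae] by simp_all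
qed (auto simp: p0_def)

lemma set_integral_p0_eq:
  fixes f :: "real \<Rightarrow> real"
  assumes [measurable]: "S \<in> sets borel" and "S \<subseteq> oiv a b"
    and [measurable]: "zero_ext f \<in> borel_measurable borel"
  shows "(LINT x:S|lborel. f x * p x) = (LINT x:S|lborel. zero_ext f x * p0 x)"
    and "set_integrable lborel S (\<lambda>x. f x * p x) \<longleftrightarrow> set_integrable lborel S (\<lambda>x. zero_ext f x * p0 x)"
proof -
  have "(\<lambda>x. indicator (oiv a b) x * (f x * p x)) = (\<lambda>x. zero_ext f x * zero_ext p x)"
    "(\<lambda>x. indicator (oiv a b) x * (zero_ext f x * p0 x)) = (\<lambda>x. zero_ext f x * p0 x)"
    by (auto simp: zero_ext_def indicator_def)
  moreover have "AE x in lborel. x \<in> oiv a b \<longrightarrow> f x * p x = zero_ext f x * p0 x"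
    using AE_p0_eq by eventually_elim auto
  ultimately show "(LINT x:S|lborel. f x * p x) = (LINT x:S|lborel. zero_ext f x * p0 x)"
    and "set_integrable lborel S (\<lambda>x. f x * p x) \<longleftrightarrow> set_integrable lborel S (\<lambda>x. zero_ext f x * p0 x)"
    using set_integral_cong_AE_on[OF oiv_measurable assms(1,2)] by simp_all
qed

lemma Ep_eq_p0:
  assumes [measurable]: "zero_ext h \<in> borel_measurable borel"
  shows "Ep a b p h = Ep a b p0 (zero_ext h)"
  unfolding Ep_def by (rule set_integral_p0_eq(1)) auto

lemma Varp_eq_p0:
  assumes [measurable]: "zero_ext h \<in> borel_measurable borel"
  shows "Varp a b p h = Varp a b p0 (zero_ext h)"
proof -
  have [measurable]: "zero_ext (\<lambda>x. (h x - c)\<^sup>2) \<in> borel_measurable borel" for c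
    unfolding zero_ext_comp[where F="\<lambda>_ u. (u - c)\<^sup>2"] by measurable
  have "Varp a b p h = (LINT x:oiv a b|lborel. zero_ext (\<lambda>x. (h x - Ep a b p h)\<^sup>2) x * p0 x)"
    unfolding Varp_def by (rule set_integral_p0_eq(1)) auto
  also have "\<dots> = Varp a b p0 (zero_ext h)"
    unfolding Varp_def Ep_eq_p0[OF assms] by (rule set_lebesgue_integral_cong) auto
  finally show ?thesis .
qed

lemma Tt_eq_centered_primitive:
  assumes [measurable]: "zero_ext h \<in> borel_measurable borel" and "t \<in> oiv a b"
  shows "Tt a b p h t = p0.centered_primitive (zero_ext h) t / p t"
proof -
  have sub: "{s. a < ereal s \<and> s \<le> t} \<subseteq> oiv a b"
    using assms(2) unfolding oiv_def using le_less_trans[of "ereal _" "ereal t" b] by auto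
  have [measurable]: "zero_ext (\<lambda>x. h x - c) \<in> borel_measurable borel" for c
    unfolding zero_ext_comp[where F="\<lambda>_ u. u - c"] by measurable
  have "(LINT s:{s. a < ereal s \<and> s \<le> t}|lborel. (h s - Ep a b p h) * p s)
      = (LINT s:{s. a < ereal s \<and> s \<le> t}|lborel. zero_ext (\<lambda>x. h x - Ep a b p h) s * p0 s)"
    by (rule set_integral_p0_eq(1)[OF _ sub]) auto
  also have "\<dots> = p0.centered_primitive (zero_ext h) t"
    unfolding p0.centered_primitive_def Ep_eq_p0[OF assms(1)]
    by (rule set_lebesgue_integral_cong) (use sub in auto)
  finally show ?thesis by (simp add: Tt_def)
qed

lemma in_L2_zero_ext:
  assumes "in_L2 a b p h"
  shows "zero_ext h \<in> borel_measurable borel" and "integrable lborel (\<lambda>x. (zero_ext h x)\<^sup>2 * p0 x)"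
proof -
  show hm [measurable]: "zero_ext h \<in> borel_measurable borel"
    using assms borel_measurable_restrict_space_iff[of "oiv a b" lborel h]
    unfolding in_L2_def zero_ext_def[abs_def] by simp
  have [measurable]: "zero_ext (\<lambda>x. (h x)\<^sup>2) \<in> borel_measurable borel"
    unfolding zero_ext_comp[where F="\<lambda>_ u. u\<^sup>2"] by measurable
  have "set_integrable lborel (oiv a b) (\<lambda>x. zero_ext (\<lambda>x. (h x)\<^sup>2) x * p0 x)"
    using assms set_integral_p0_eq(2)[OF oiv_measurable subset_refl, of "\<lambda>x. (h x)\<^sup>2"]
    unfolding in_L2_def by simp
  moreover have "(\<lambda>x. indicator (oiv a b) x *\<^sub>R (zero_ext (\<lambda>x. (h x)\<^sup>2) x * p0 x)) = (\<lambda>x. (zero_ext h x)\<^sup>2 * p0 x)"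
    by (auto simp: zero_ext_def indicator_def p0_def)
  ultimately show "integrable lborel (\<lambda>x. (zero_ext h x)\<^sup>2 * p0 x)"
    unfolding set_integrable_def by simp
qed

lemma in_L1_zero_ext:
  assumes [measurable]: "zero_ext h \<in> borel_measurable borel" and "in_L1 a b p h"
  shows "integrable lborel (\<lambda>x. zero_ext h x * p0 x)"
proof -
  have "set_integrable lborel (oiv a b) (\<lambda>x. zero_ext h x * p0 x)"
    using assms set_integral_p0_eq(2)[OF oiv_measurable subset_refl] unfolding in_L1_def by blast
  moreover have "(\<lambda>x. indicator (oiv a b) x *\<^sub>R (zero_ext h x * p0 x)) = (\<lambda>x. zero_ext h x * p0 x)"
    by (auto simp: zero_ext_def indicator_def)
  ultimately show ?thesis unfolding set_integrable_def by simp
qed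

lemma in_L2_imp_in_L1:
  assumes "in_L2 a b p h"
  shows "in_L1 a b p h"
proof -
  note hm [measurable] = in_L2_zero_ext(1)[OF assms]
  have "integrable lborel (\<lambda>x. zero_ext h x * p0 x)"
    using p0.integrable_mult_density_of_sq[OF hm in_L2_zero_ext(2)[OF assms]] .
  from integrable_mult_indicator[OF _ this, of "oiv a b"]
  have "set_integrable lborel (oiv a b) (\<lambda>x. zero_ext h x * p0 x)"
    unfolding set_integrable_def by simp
  then show ?thesis
    unfolding in_L1_def using set_integral_p0_eq(2)[OF oiv_measurable subset_refl hm] by blast
qed

lemma Varp_nonneg: "0 \<le> Varp a b p h"
  unfolding Varp_def set_lebesgue_integral_def
  by (rule integral_nonneg_AE) (use AE_p_pos in \<open>eventually_elim, auto simp: indicator_def\<close>)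

lemma weak_deriv_zero_ext_measurable:
  assumes "weak_deriv (oiv a b) h h'"
  shows "zero_ext h' \<in> borel_measurable borel"
  using loc_integrable_oiv_measurable[OF ab] assms
  unfolding weak_deriv_def zero_ext_def[abs_def] by blast

lemma decreasing_zero_ext_measurable:
  assumes "weak_deriv (oiv a b) h h'" "AE x in lborel. x \<in> oiv a b \<longrightarrow> h' x < 0"
  shows "zero_ext h \<in> borel_measurable borel"
proof -
  have "antimono_on (oiv a b) h"
    using assms(1) by (rule weak_deriv_nonpos_antimono_on) (use assms(2) in \<open>auto elim: eventually_mono\<close>)
  then have "mono_on (oiv a b) (\<lambda>x. - h x)"
    by (auto intro!: monotone_onI dest: monotone_onD)
  then have "(\<lambda>x. - (- h x)) \<in> borel_measurable (restrict_space borel (oiv a b))"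
    by (intro borel_measurable_uminus borel_measurable_mono_on_fnc)
  then show ?thesis
    using borel_measurable_restrict_space_iff[of "oiv a b" borel h]
    unfolding zero_ext_def[abs_def] by simp
qed

lemma neg_weak_deriv_normal_form:
  assumes "weak_deriv (oiv a b) h h'" "AE x in lborel. x \<in> oiv a b \<longrightarrow> h' x < 0"
  obtains k where "k \<in> borel_measurable borel" "\<And>t. 0 \<le> k t" "\<And>t. t \<notin> oiv a b \<Longrightarrow> k t = 0"
    "AE t in lborel. t \<in> oiv a b \<longrightarrow> 0 < k t \<and> k t = - h' t"
    "weak_deriv (oiv a b) (zero_ext h) (\<lambda>t. - k t)"
proof (rule that[of "\<lambda>t. max 0 (- zero_ext h' t)"])
  note [measurable] = weak_deriv_zero_ext_measurable[OF assms(1)]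
  show "(\<lambda>t. max 0 (- zero_ext h' t)) \<in> borel_measurable borel" by measurable
  show ae: "AE t in lborel. t \<in> oiv a b \<longrightarrow> 0 < max 0 (- zero_ext h' t) \<and> max 0 (- zero_ext h' t) = - h' t"
    using assms(2) by eventually_elim auto
  show "weak_deriv (oiv a b) (zero_ext h) (\<lambda>t. - max 0 (- zero_ext h' t))"
  proof (rule weak_deriv_oiv_cong_AE[OF assms(1)])
    show "(\<lambda>x. indicator (oiv a b) x * h' x) \<in> borel_measurable borel"
      using weak_deriv_zero_ext_measurable[OF assms(1)] by (simp add: zero_ext_def[abs_def])
    show "(\<lambda>x. indicator (oiv a b) x * - max 0 (- zero_ext h' x)) \<in> borel_measurable borel"
      by measurable
    show "AE x in lborel. x \<in> oiv a b \<longrightarrow> h' x = - max 0 (- zero_ext h' x)"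
      using ae by eventually_elim auto
  qed simp
qed auto

definition poincare_ratio :: "(real \<Rightarrow> real) \<Rightarrow> (real \<Rightarrow> real) \<Rightarrow> real \<Rightarrow> real" where
  "poincare_ratio h h' x = - Tt a b p h x / (h' x * w x)"

lemma poincare_ratio_eq:
  assumes "zero_ext h \<in> borel_measurable borel" "t \<in> oiv a b"
  shows "poincare_ratio h h' t = p0.centered_primitive (zero_ext h) t / (p t * - h' t * w t)"
  unfolding poincare_ratio_def Tt_eq_centered_primitive[OF assms] by (simp add: field_simps)

lemma AE_centered_primitive_eq_ratio:
  assumes "zero_ext h \<in> borel_measurable borel"
    and k_outside: "\<And>t. t \<notin> oiv a b \<Longrightarrow> k t = 0"
    and k: "AE t in lborel. t \<in> oiv a b \<longrightarrow> 0 < k t \<and> k t = - h' t"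
  shows "AE t in lborel. ennreal ((zero_ext u t)\<^sup>2 / k t) * ennreal (p0.centered_primitive (zero_ext h) t)
    = ennreal (poincare_ratio h h' t) * ennreal ((u t)\<^sup>2 * w t * p t) * indicator (oiv a b) t"
  using k AE_p_pos AE_w_pos
proof eventually_elim
  case (elim t)
  show ?case
  proof (cases "t \<in> oiv a b")
    case True
    with elim have pos: "0 < k t" "0 < p t" "0 < w t" and "k t = - h' t" by auto
    then have "(u t)\<^sup>2 / k t * p0.centered_primitive (zero_ext h) t
        = poincare_ratio h h' t * ((u t)\<^sup>2 * w t * p t)"
      unfolding poincare_ratio_eq[OF assms(1) True] by (simp add: field_simps)
    with True pos show ?thesis
      by (simp add: ennreal_mult'[symmetric] ennreal_mult''[symmetric])
  qed (simp add: k_outside)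
qed

lemma Varp_eq_ratio_energy:
  assumes "in_L2 a b p h" "weak_deriv (oiv a b) h h'" "AE x in lborel. x \<in> oiv a b \<longrightarrow> h' x < 0"
  shows "ennreal (Varp a b p h)
    = (\<integral>\<^sup>+t\<in>oiv a b. ennreal (poincare_ratio h h' t) * ennreal ((h' t)\<^sup>2 * w t * p t) \<partial>lborel)"
proof -
  obtain k where k: "k \<in> borel_measurable borel" "\<And>t. 0 \<le> k t" "\<And>t. t \<notin> oiv a b \<Longrightarrow> k t = 0"
    "AE t in lborel. t \<in> oiv a b \<longrightarrow> 0 < k t \<and> k t = - h' t"
    "weak_deriv (oiv a b) (zero_ext h) (\<lambda>t. - k t)"
    using neg_weak_deriv_normal_form[OF assms(2,3)] by blast
  note [measurable] = k(1) in_L2_zero_ext(1)[OF assms(1)]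
  have "ennreal (Varp a b p h) = (\<integral>\<^sup>+t. ennreal (k t) * ennreal (p0.centered_primitive (zero_ext h) t) \<partial>lborel)"
    unfolding Varp_eq_p0[OF in_L2_zero_ext(1)[OF assms(1)]]
    by (rule p0.Varp_eq_nn_integral_centered_primitive[OF _ _ in_L2_zero_ext(2)[OF assms(1)] k(2,5)]) measurable
  also have "\<dots> = (\<integral>\<^sup>+t. ennreal ((zero_ext h' t)\<^sup>2 / k t) * ennreal (p0.centered_primitive (zero_ext h) t) \<partial>lborel)"
    using k(4)
  proof (intro nn_integral_cong_AE, eventually_elim)
    case (elim t)
    then have "k t = (zero_ext h' t)\<^sup>2 / k t"
      using k(3) by (cases "t \<in> oiv a b") (auto simp: power2_eq_square)
    then show ?case by simp
  qed
  also have "\<dots> = (\<integral>\<^sup>+t\<in>oiv a b. ennreal (poincare_ratio h h' t) * ennreal ((h' t)\<^sup>2 * w t * p t) \<partial>lborel)"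
    by (rule nn_integral_cong_AE[OF AE_centered_primitive_eq_ratio[OF _ k(3,4)]]) measurable
  finally show ?thesis .
qed

lemma Varp_le_ratio_energy:
  assumes "in_L1 a b p h" "weak_deriv (oiv a b) h h'" "AE x in lborel. x \<in> oiv a b \<longrightarrow> h' x < 0"
    and g: "in_H1 a b p w g g'"
  shows "ennreal (Varp a b p g)
    \<le> (\<integral>\<^sup>+t\<in>oiv a b. ennreal (poincare_ratio h h' t) * ennreal ((g' t)\<^sup>2 * w t * p t) \<partial>lborel)"
proof -
  obtain k where k: "k \<in> borel_measurable borel" "\<And>t. 0 \<le> k t" "\<And>t. t \<notin> oiv a b \<Longrightarrow> k t = 0"
    "AE t in lborel. t \<in> oiv a b \<longrightarrow> 0 < k t \<and> k t = - h' t"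
    "weak_deriv (oiv a b) (zero_ext h) (\<lambda>t. - k t)"
    using neg_weak_deriv_normal_form[OF assms(2,3)] by blast
  have g_L2: "in_L2 a b p g" and g_deriv: "weak_deriv (oiv a b) g g'"
    using g unfolding in_H1_def by blast+
  note [measurable] = k(1) decreasing_zero_ext_measurable[OF assms(2,3)]
    in_L2_zero_ext(1)[OF g_L2] weak_deriv_zero_ext_measurable[OF g_deriv]
  have "weak_deriv (oiv a b) (zero_ext g) (zero_ext g')"
  proof (rule weak_deriv_oiv_cong_AE[OF g_deriv])
    show "(\<lambda>x. indicator (oiv a b) x * g' x) \<in> borel_measurable borel"
      using weak_deriv_zero_ext_measurable[OF g_deriv] by (simp add: zero_ext_def[abs_def])
    show "(\<lambda>x. indicator (oiv a b) x * zero_ext g' x) \<in> borel_measurable borel"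
      by measurable
  qed auto
  moreover have "AE t in lborel. t \<in> oiv a b \<longrightarrow> 0 < k t"
    using k(4) by eventually_elim auto
  ultimately have "ennreal (Varp a b p0 (zero_ext g))
      \<le> (\<integral>\<^sup>+t. ennreal ((zero_ext g' t)\<^sup>2 / k t) * ennreal (p0.centered_primitive (zero_ext h) t) \<partial>lborel)"
    using in_L1_zero_ext[OF _ assms(1)] in_L2_zero_ext(2)[OF g_L2] k(2,5)
    by (intro p0.Varp_le_nn_integral_centered_primitive) auto
  also have "\<dots> = (\<integral>\<^sup>+t\<in>oiv a b. ennreal (poincare_ratio h h' t) * ennreal ((g' t)\<^sup>2 * w t * p t) \<partial>lborel)"
    by (rule nn_integral_cong_AE[OF AE_centered_primitive_eq_ratio[OF _ k(3,4)]]) measurable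
  finally show ?thesis
    unfolding Varp_eq_p0[OF in_L2_zero_ext(1)[OF g_L2]] .
qed

lemma AE_poincare_ratio_nonneg:
  assumes "in_L1 a b p h" "weak_deriv (oiv a b) h h'" "AE x in lborel. x \<in> oiv a b \<longrightarrow> h' x < 0"
  shows "AE t in lborel. t \<in> oiv a b \<longrightarrow> 0 \<le> poincare_ratio h h' t"
proof -
  obtain k where k: "k \<in> borel_measurable borel" "\<And>t. 0 \<le> k t" "\<And>t. t \<notin> oiv a b \<Longrightarrow> k t = 0"
    "AE t in lborel. t \<in> oiv a b \<longrightarrow> 0 < k t \<and> k t = - h' t"
    "weak_deriv (oiv a b) (zero_ext h) (\<lambda>t. - k t)"
    using neg_weak_deriv_normal_form[OF assms(2,3)] by blast
  note hm = decreasing_zero_ext_measurable[OF assms(2,3)]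
  have "antimono_on (oiv a b) (zero_ext h)"
    using k(5) by (rule weak_deriv_nonpos_antimono_on) (simp add: k(2))
  then have cp: "0 \<le> p0.centered_primitive (zero_ext h) t" for t
    by (rule p0.centered_primitive_double_integral(1)[OF hm in_L1_zero_ext[OF hm assms(1)]])
  show ?thesis
    using assms(3) AE_p_pos AE_w_pos
  proof eventually_elim
    case (elim t)
    show ?case
    proof
      assume t: "t \<in> oiv a b"
      with elim have "0 < p t * - h' t * w t" by (intro mult_pos_pos) auto
      with cp[of t] show "0 \<le> poincare_ratio h h' t"
        unfolding poincare_ratio_eq[OF hm t] by (rule divide_nonneg_pos)
    qed
  qed
qed

lemma energy_integrand_measurable:
  assumes "zero_ext g' \<in> borel_measurable borel"
  shows "(\<lambda>t. ennreal ((g' t)\<^sup>2 * w t * p t) * indicator (oiv a b) t) \<in> borel_measurable lborel"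
proof -
  have "(\<lambda>t. ennreal ((g' t)\<^sup>2 * w t * p t) * indicator (oiv a b) t)
      = (\<lambda>t. ennreal ((zero_ext g' t)\<^sup>2 * zero_ext w t * zero_ext p t) * indicator (oiv a b) t)"
    by (auto simp: indicator_def)
  also have "\<dots> \<in> borel_measurable lborel" using assms by measurable
  finally show ?thesis .
qed

lemma energy_ne_zero:
  assumes "zero_ext h' \<in> borel_measurable borel" "AE x in lborel. x \<in> oiv a b \<longrightarrow> h' x < 0"
  shows "(\<integral>\<^sup>+t\<in>oiv a b. ennreal ((h' t)\<^sup>2 * w t * p t) \<partial>lborel) \<noteq> 0"
proof
  assume "(\<integral>\<^sup>+t\<in>oiv a b. ennreal ((h' t)\<^sup>2 * w t * p t) \<partial>lborel) = 0"
  then have "AE t in lborel. ennreal ((h' t)\<^sup>2 * w t * p t) * indicator (oiv a b) t = 0"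
    using nn_integral_0_iff_AE[OF energy_integrand_measurable[OF assms(1)]] by simp
  then have "AE t in lborel. t \<notin> oiv a b"
    using assms(2) AE_p_pos AE_w_pos by eventually_elim auto
  with not_AE_notin_oiv[OF ab] show False ..
qed

lemma in_H1_if_energy_finite:
  assumes "in_L2 a b p h" "weak_deriv (oiv a b) h h'"
    and "(\<integral>\<^sup>+t\<in>oiv a b. ennreal ((h' t)\<^sup>2 * w t * p t) \<partial>lborel) \<noteq> \<infinity>"
  shows "in_H1 a b p w h h'"
  unfolding in_H1_def set_integrable_def
proof (intro conjI integrableI_nonneg)
  show "in_L2 a b p h" "weak_deriv (oiv a b) h h'" by (fact assms)+
  note [measurable] = weak_deriv_zero_ext_measurable[OF assms(2)]
  have eq: "(\<lambda>x. indicator (oiv a b) x *\<^sub>R ((h' x)\<^sup>2 * (p x * w x)))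
      = (\<lambda>x. (zero_ext h' x)\<^sup>2 * (zero_ext p x * zero_ext w x))"
    by (auto simp: indicator_def)
  show "(\<lambda>x. indicator (oiv a b) x *\<^sub>R ((h' x)\<^sup>2 * (p x * w x))) \<in> borel_measurable lborel"
    unfolding eq by measurable
  show "AE x in lborel. 0 \<le> indicator (oiv a b) x *\<^sub>R ((h' x)\<^sup>2 * (p x * w x))"
    using AE_p_pos AE_w_pos by eventually_elim (auto simp: indicator_def)
  have "(\<integral>\<^sup>+x. ennreal (indicator (oiv a b) x *\<^sub>R ((h' x)\<^sup>2 * (p x * w x))) \<partial>lborel)
      = (\<integral>\<^sup>+t\<in>oiv a b. ennreal ((h' t)\<^sup>2 * w t * p t) \<partial>lborel)"
    by (intro nn_integral_cong) (simp add: indicator_def mult_ac)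
  with assms(3) show "(\<integral>\<^sup>+x. ennreal (indicator (oiv a b) x *\<^sub>R ((h' x)\<^sup>2 * (p x * w x))) \<partial>lborel) < \<infinity>"
    by (simp add: top.not_eq_extremum)
qed


lemma ess_inf_mult_energy_le_Varp:
  assumes "in_L2 a b p h" "weak_deriv (oiv a b) h h'" "AE x in lborel. x \<in> oiv a b \<longrightarrow> h' x < 0"
    and "ereal y \<le> ess_inf_on (oiv a b) (poincare_ratio h h')"
  shows "ennreal y * (\<integral>\<^sup>+t\<in>oiv a b. ennreal ((h' t)\<^sup>2 * w t * p t) \<partial>lborel) \<le> ennreal (Varp a b p h)"
proof -
  have "ennreal y * (\<integral>\<^sup>+t\<in>oiv a b. ennreal ((h' t)\<^sup>2 * w t * p t) \<partial>lborel)
      = (\<integral>\<^sup>+t\<in>oiv a b. ennreal y * ennreal ((h' t)\<^sup>2 * w t * p t) \<partial>lborel)"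
    using energy_integrand_measurable[OF weak_deriv_zero_ext_measurable[OF assms(2)]]
    by (subst nn_integral_cmult[symmetric]) (auto simp: mult.assoc)
  also have "\<dots> \<le> (\<integral>\<^sup>+t\<in>oiv a b. ennreal (poincare_ratio h h' t) * ennreal ((h' t)\<^sup>2 * w t * p t) \<partial>lborel)"
    using AE_ess_inf_on_le[of "oiv a b" "poincare_ratio h h'"]
  proof (intro nn_integral_mono_AE, eventually_elim)
    case (elim t)
    with assms(4) have "t \<in> oiv a b \<Longrightarrow> y \<le> poincare_ratio h h' t"
      by (metis ereal_less_eq(3) order_trans)
    then show ?case by (cases "t \<in> oiv a b") (auto intro!: mult_right_mono ennreal_leI)
  qed
  also have "\<dots> = ennreal (Varp a b p h)"
    by (rule Varp_eq_ratio_energy[OF assms(1-3), symmetric])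
  finally show ?thesis .
qed

lemma ess_inf_le_poincare_const:
  assumes L2: "in_L2 a b p h" and deriv: "weak_deriv (oiv a b) h h'"
    and neg: "AE x in lborel. x \<in> oiv a b \<longrightarrow> h' x < 0"
  shows "ess_inf_on (oiv a b) (poincare_ratio h h') \<le> poincare_const a b p w"
proof (cases "ess_inf_on (oiv a b) (poincare_ratio h h') \<le> 0")
  case True
  then show ?thesis using poincare_const_nonneg by (rule order_trans)
next
  case False
  define E where "E = (\<integral>\<^sup>+t\<in>oiv a b. ennreal ((h' t)\<^sup>2 * w t * p t) \<partial>lborel)"
  have "ess_inf_on (oiv a b) (poincare_ratio h h') \<noteq> \<infinity>"
  proof
    assume "ess_inf_on (oiv a b) (poincare_ratio h h') = \<infinity>"
    with AE_ess_inf_on_le[of "oiv a b" "poincare_ratio h h'"]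
    have "AE t in lborel. t \<notin> oiv a b" by auto
    with not_AE_notin_oiv[OF ab] show False ..
  qed
  with False obtain y where y: "ess_inf_on (oiv a b) (poincare_ratio h h') = ereal y" "0 < y"
    by (cases "ess_inf_on (oiv a b) (poincare_ratio h h')") auto
  have bound: "ennreal y * E \<le> ennreal (Varp a b p h)"
    unfolding E_def by (rule ess_inf_mult_energy_le_Varp[OF L2 deriv neg]) (simp add: y)
  have "E \<noteq> 0"
    unfolding E_def by (rule energy_ne_zero[OF weak_deriv_zero_ext_measurable[OF deriv] neg])
  moreover have "E \<noteq> \<infinity>"
    using bound \<open>0 < y\<close> by (auto simp: ennreal_mult_eq_top_iff top_unique)
  ultimately obtain e where e: "E = ennreal e" "0 < e"
    by (cases E) (auto simp: ennreal_eq_0_iff)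
  have "ennreal (y * e) \<le> ennreal (Varp a b p h)"
    using bound e y by (simp add: ennreal_mult'[symmetric])
  with mult_pos_pos[OF y(2) e(2)] have "y * e \<le> Varp a b p h"
    by (auto simp: ennreal_le_iff2)
  with e have "ereal y \<le> ereal (Varp a b p h / e)"
    by (simp add: pos_le_divide_eq)
  also have "\<dots> \<le> poincare_const a b p w"
    using in_H1_if_energy_finite[OF L2 deriv] \<open>E \<noteq> \<infinity>\<close> e
    by (intro Varp_div_energy_le_poincare_const) (auto simp: E_def energy_def)
  finally show ?thesis unfolding y .
qed

lemma poincare_const_le_ess_sup:
  assumes L1: "in_L1 a b p h" and deriv: "weak_deriv (oiv a b) h h'"
    and neg: "AE x in lborel. x \<in> oiv a b \<longrightarrow> h' x < 0"
  shows "poincare_const a b p w \<le> ess_sup_on (oiv a b) (poincare_ratio h h')"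
proof -
  define Z where "Z = ess_sup_on (oiv a b) (poincare_ratio h h')"
  have "0 \<le> Z"
  proof (rule ccontr)
    assume "\<not> 0 \<le> Z"
    have "AE t in lborel. t \<notin> oiv a b"
      using AE_le_ess_sup_on[of "oiv a b" "poincare_ratio h h'"] AE_poincare_ratio_nonneg[OF L1 deriv neg]
    proof eventually_elim
      case (elim t)
      have "0 \<le> Z" if "t \<in> oiv a b"
        using elim that unfolding Z_def by (metis ereal_less_eq(3) order_trans zero_ereal_def)
      with \<open>\<not> 0 \<le> Z\<close> show ?case by auto
    qed
    with not_AE_notin_oiv[OF ab] show False ..
  qed
  moreover have "ereal (Varp a b p g) \<le> Z * energy a b p w g'" if g: "in_H1 a b p w g g'" for g g'
  proof -
    have "weak_deriv (oiv a b) g g'" using g unfolding in_H1_def by blast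
    note [measurable] = energy_integrand_measurable[OF weak_deriv_zero_ext_measurable[OF this]]
    have "ennreal (Varp a b p g)
        \<le> (\<integral>\<^sup>+t\<in>oiv a b. ennreal (poincare_ratio h h' t) * ennreal ((g' t)\<^sup>2 * w t * p t) \<partial>lborel)"
      by (rule Varp_le_ratio_energy[OF L1 deriv neg g])
    also have "\<dots> \<le> e2ennreal Z * (\<integral>\<^sup>+t\<in>oiv a b. ennreal ((g' t)\<^sup>2 * w t * p t) \<partial>lborel)"
      unfolding Z_def by (rule set_nn_integral_le_ess_sup_mult) measurable
    finally have "enn2ereal (ennreal (Varp a b p g))
        \<le> enn2ereal (e2ennreal Z * (\<integral>\<^sup>+t\<in>oiv a b. ennreal ((g' t)\<^sup>2 * w t * p t) \<partial>lborel))"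
      by (subst less_eq_ennreal.rep_eq[symmetric])
    also have "\<dots> = Z * energy a b p w g'"
      unfolding times_ennreal.rep_eq energy_def enn2ereal_e2ennreal[OF \<open>0 \<le> Z\<close>] ..
    finally show ?thesis using Varp_nonneg by simp
  qed
  ultimately show ?thesis
    unfolding poincare_const_def Z_def[symmetric] by (intro Inf_lower) blast
qed

lemma Varp_eq_const_mult_energy:
  assumes L2: "in_L2 a b p h" and deriv: "weak_deriv (oiv a b) h h'"
    and neg: "AE x in lborel. x \<in> oiv a b \<longrightarrow> h' x < 0"
    and const: "AE x in lborel. x \<in> oiv a b \<longrightarrow> poincare_ratio h h' x = c" and "0 \<le> c"
  shows "ereal (Varp a b p h) = ereal c * energy a b p w h'"
proof -
  note [measurable] = energy_integrand_measurable[OF weak_deriv_zero_ext_measurable[OF deriv]]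
  have "ennreal (Varp a b p h)
      = (\<integral>\<^sup>+t. ennreal c * (ennreal ((h' t)\<^sup>2 * w t * p t) * indicator (oiv a b) t) \<partial>lborel)"
    unfolding Varp_eq_ratio_energy[OF L2 deriv neg]
    using const by (intro nn_integral_cong_AE) (auto elim!: eventually_mono split: split_indicator)
  also have "\<dots> = ennreal c * (\<integral>\<^sup>+t\<in>oiv a b. ennreal ((h' t)\<^sup>2 * w t * p t) \<partial>lborel)"
    by (rule nn_integral_cmult) measurable
  finally show ?thesis
    unfolding energy_def using Varp_nonneg[of h] \<open>0 \<le> c\<close>
    by (metis enn2ereal_ennreal times_ennreal.rep_eq)
qed

end

theorem theorem3p1:
  fixes a b :: ereal and p w h1 h1' h2 h2' :: "real \<Rightarrow> real"
  assumes "a < b"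
    and "is_density a b p"
    and "is_weight a b p w"
    and "in_L1 a b p h1" and "weak_deriv (oiv a b) h1 h1'"
    and "in_L2 a b p h2" and "weak_deriv (oiv a b) h2 h2'"
    and "AE x in lborel. x \<in> oiv a b \<longrightarrow> h1' x < 0"
    and "AE x in lborel. x \<in> oiv a b \<longrightarrow> h2' x < 0"
  shows "ess_inf_on (oiv a b) (\<lambda>x. - Tt a b p h2 x / (h2' x * w x)) \<le> poincare_const a b p w
       \<and> poincare_const a b p w \<le> ess_sup_on (oiv a b) (\<lambda>x. - Tt a b p h1 x / (h1' x * w x))
       \<and> ((\<exists>c. AE x in lborel. x \<in> oiv a b \<longrightarrow> - Tt a b p h2 x / (h2' x * w x) = c)
            \<longrightarrow> ereal (Varp a b p h2) = poincare_const a b p w * energy a b p w h2')"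
proof -
  interpret poincare_setting a b p w
    using assms(1-3) by unfold_locales
  have lower: "ess_inf_on (oiv a b) (poincare_ratio h2 h2') \<le> poincare_const a b p w"
    using assms(6,7,9) by (rule ess_inf_le_poincare_const)
  have upper: "poincare_const a b p w \<le> ess_sup_on (oiv a b) (poincare_ratio h1 h1')"
    using assms(4,5,8) by (rule poincare_const_le_ess_sup)
  have saturation: "ereal (Varp a b p h2) = poincare_const a b p w * energy a b p w h2'"
    if const: "AE x in lborel. x \<in> oiv a b \<longrightarrow> poincare_ratio h2 h2' x = c" for c
  proof -
    have "poincare_const a b p w \<le> ess_sup_on (oiv a b) (poincare_ratio h2 h2')"
      using in_L2_imp_in_L1[OF assms(6)] assms(7,9) by (rule poincare_const_le_ess_sup)
    with lower ess_inf_sup_on_AE_const[OF const] have C: "poincare_const a b p w = ereal c"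
      by (metis order_antisym order_trans)
    with poincare_const_nonneg have "0 \<le> c" by (metis ereal_less_eq(5))
    with C show ?thesis using Varp_eq_const_mult_energy[OF assms(6,7,9) const] by simp
  qed
  show ?thesis
    using lower upper saturation unfolding poincare_ratio_def by blast
qed

end
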